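(* Let $X$ be a real Hilbert space, $f:X\to\mathbb{R}\cup\{+\infty\}$ a proper $\Phi_{lsc}$-convex function and $\bar x\in\mathrm{dom}(f)$. If $(a,v)\in\partial^{loc}_{lsc}f(\bar x)$, then there exists $\bar a\ge 0$ such that $(\bar a,\ v-2a\bar x+2\bar a\bar x)\in\partial_{lsc}f(\bar x)$.
   Context: $\Phi_{lsc}$ is the class of functions $\varphi(x)=-a\|x\|^2+\langle v,x\rangle+c$ ($a\ge0$, $v\in X^*$, $c\in\mathbb{R}$); $\mathrm{supp}(f)=\{\varphi\in\Phi_{lsc}:\varphi\le f\}$; $f$ is $\Phi_{lsc}$-convex if $f=\sup\mathrm{supp}(f)$ pointwise; proper means $\mathrm{supp}(f)\ne\emptyset$ and $\mathrm{dom}(f)\ne\emptyset$. For $\varepsilon\ge0$ and $\bar x\in\mathrm{dom}(f)$, a pair $(a,v)\in\mathbb{R}_+\times X^*$ is an $\varepsilon$-$\Phi_{lsc}$-subgradient of $f$ at $\bar x$ if $f(x)-f(\bar x)\ge\langle v,x-\bar x\rangle-a\|x\|^2+a\|\bar x\|^2-\varepsilon$ for all $x\in X$; the set of these is $\partial^\varepsilon_{lsc}f(\bar x)$, and $\partial_{lsc}f(\bar x):=\partial^0_{lsc}f(\bar x)$. A pair $(a,v)\in\mathbb{R}_+\times X^*$ is a local $\Phi_{lsc}$-subgradient of $f$ at $\bar x$ if there is $\delta>0$ such that $f(x)-f(\bar x)\ge\langle v,x-\bar x\rangle-a\|x\|^2+a\|\bar x\|^2$ for all $x$ with $\|x-\bar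 x\|<\delta$; the set of these is $\partial^{loc}_{lsc}f(\bar x)$. *)

theory Defs
  imports "HOL-Analysis.Analysis"
begin

text \<open>The dual X* is identified with X by the Riesz representation (pairing = inner product).
 Functions f : X -> R \<union> {+inf} are modelled as ereal-valued functions never equal to -inf.\<close>

definition Phi_lsc :: "('a::real_inner \<Rightarrow> real) set" where
  "Phi_lsc = {\<phi>. \<exists>a v c. a \<ge> 0 \<and> \<phi> = (\<lambda>x. - a * (norm x)\<^sup>2 + inner v x + c)}"

definition supp :: "('a::real_inner \<Rightarrow> ereal) \<Rightarrow> ('a \<Rightarrow> real) set" where
  "supp f = {\<phi> \<in> Phi_lsc. \<forall>x. ereal (\<phi> x) \<le> f x}"

definition Phi_lsc_convex :: "('a::real_inner \<Rightarrow> ereal) \<Rightarrow> bool" where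
  "Phi_lsc_convex f \<longleftrightarrow> (\<forall>x. f x = (SUP \<phi>\<in>supp f. ereal (\<phi> x)))"

definition edom :: "('a \<Rightarrow> ereal) \<Rightarrow> 'a set" where
  "edom f = {x. f x < \<infinity>}"

definition proper_fun :: "('a::real_inner \<Rightarrow> ereal) \<Rightarrow> bool" where
  "proper_fun f \<longleftrightarrow> supp f \<noteq> {} \<and> edom f \<noteq> {}"

definition eps_subdiff_lsc :: "real \<Rightarrow> ('a::real_inner \<Rightarrow> ereal) \<Rightarrow> 'a \<Rightarrow> (real \<times> 'a) set" where
  "eps_subdiff_lsc \<epsilon> f xb = {(a, v). a \<ge> 0 \<and>
     (\<forall>x. f x - f xb \<ge> ereal (inner v (x - xb) - a * (norm x)\<^sup>2 + a * (norm xb)\<^sup>2 - \<epsilon>))}"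

definition subdiff_lsc :: "('a::real_inner \<Rightarrow> ereal) \<Rightarrow> 'a \<Rightarrow> (real \<times> 'a) set" where
  "subdiff_lsc f xb = eps_subdiff_lsc 0 f xb"

definition loc_subdiff_lsc :: "('a::real_inner \<Rightarrow> ereal) \<Rightarrow> 'a \<Rightarrow> (real \<times> 'a) set" where
  "loc_subdiff_lsc f xb = {(a, v). a \<ge> 0 \<and> (\<exists>\<delta>>0. \<forall>x. norm (x - xb) < \<delta> \<longrightarrow>
     f x - f xb \<ge> ereal (inner v (x - xb) - a * (norm x)\<^sup>2 + a * (norm xb)\<^sup>2))}"

end

theory Submission
  imports Defs
begin

text \<open>Rewriting the quadratic as \<open>\<langle>v - 2a x\<^sub>0, x - x\<^sub>0\<rangle> - a\<parallel>x - x\<^sub>0\<parallel>\<^sup>2\<close>, a local subgradient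
  bounds \<open>f\<close> from below near \<open>x\<^sub>0\<close> by a concave quadratic centred at \<open>x\<^sub>0\<close>. Away from \<open>x\<^sub>0\<close>
  any single minorant \<open>\<phi> \<in> supp f\<close> does the same job, once the curvature of the centred
  quadratic is increased enough to absorb the affine and constant discrepancy with \<open>\<phi>\<close>.
  Taking the larger of the two curvatures gives a global subgradient.\<close>

lemma quadratic_recentre:
  fixes x x0 v :: "'a::real_inner"
  shows "inner v (x - x0) - a * (norm x)\<^sup>2 + a * (norm x0)\<^sup>2
       = inner (v - (2 * a) *\<^sub>R x0) (x - x0) - a * (norm (x - x0))\<^sup>2"
  by (simp add: power2_norm_eq_inner inner_diff_left inner_diff_right inner_commute algebra_simps)

lemma quadratic_dominates_affine_outside_ball:
  fixes \<delta> t P K b :: real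
  assumes "0 < \<delta>" "\<delta> \<le> t" "0 \<le> P" "P / \<delta> + \<bar>K\<bar> / \<delta>\<^sup>2 \<le> b"
  shows "P * t - K \<le> b * t\<^sup>2"
proof -
  have "t / \<delta> \<ge> 1" using assms(1,2) by simp
  have "P * t = P * t * 1" by simp
  also have "\<dots> \<le> P * t * (t / \<delta>)"
    using \<open>t / \<delta> \<ge> 1\<close> assms by (intro mult_left_mono) simp_all
  also have "\<dots> = P / \<delta> * t\<^sup>2" by (simp add: power2_eq_square)
  finally have affine: "P * t \<le> P / \<delta> * t\<^sup>2" .
  have "- K \<le> \<bar>K\<bar> * (t / \<delta>)\<^sup>2"
    using \<open>t / \<delta> \<ge> 1\<close> one_le_power[of "t / \<delta>" 2]
    by (smt (verit) abs_ge_zero mult_le_cancel_left1)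
  also have "\<dots> = \<bar>K\<bar> / \<delta>\<^sup>2 * t\<^sup>2" by (simp add: power_divide)
  finally have constant_term: "- K \<le> \<bar>K\<bar> / \<delta>\<^sup>2 * t\<^sup>2" .
  have "(P / \<delta> + \<bar>K\<bar> / \<delta>\<^sup>2) * t\<^sup>2 \<le> b * t\<^sup>2"
    using assms(4) by (simp add: mult_right_mono)
  with affine constant_term show ?thesis by (simp add: distrib_right)
qed

lemma Phi_lsc_recentre:
  fixes x0 :: "'a::real_inner"
  assumes "\<phi> \<in> Phi_lsc"
  obtains c u where "0 \<le> c"
    and "\<And>x. \<phi> x = \<phi> x0 + inner u (x - x0) - c * (norm (x - x0))\<^sup>2"
proof -
  obtain c u d where "0 \<le> c" and \<phi>: "\<phi> = (\<lambda>x. - c * (norm x)\<^sup>2 + inner u x + d)"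
    using assms unfolding Phi_lsc_def by auto
  have "\<phi> x = \<phi> x0 + inner (u - (2 * c) *\<^sub>R x0) (x - x0) - c * (norm (x - x0))\<^sup>2" for x
    using quadratic_recentre[of u x x0 c] unfolding \<phi> by (simp add: inner_diff_right)
  with \<open>0 \<le> c\<close> show thesis by (rule that)
qed

lemma Phi_lsc_above_centred_quadratic_outside_ball:
  fixes x0 w :: "'a::real_inner"
  assumes "\<phi> \<in> Phi_lsc" "0 < \<delta>"
  obtains b where
    "\<And>x. \<delta> \<le> norm (x - x0) \<Longrightarrow> r + inner w (x - x0) - b * (norm (x - x0))\<^sup>2 \<le> \<phi> x"
proof -
  obtain c u where "0 \<le> c"
    and \<phi>: "\<And>x. \<phi> x = \<phi> x0 + inner u (x - x0) - c * (norm (x - x0))\<^sup>2"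
    using Phi_lsc_recentre[OF assms(1)] by blast
  define K where "K = \<phi> x0 - r"
  define b where "b = c + (norm (u - w) / \<delta> + \<bar>K\<bar> / \<delta>\<^sup>2)"
  have "r + inner w (x - x0) - b * (norm (x - x0))\<^sup>2 \<le> \<phi> x" if far: "\<delta> \<le> norm (x - x0)" for x
  proof -
    have "norm (u - w) * norm (x - x0) - K \<le> (b - c) * (norm (x - x0))\<^sup>2"
      by (rule quadratic_dominates_affine_outside_ball[OF assms(2) far]) (simp_all add: b_def)
    moreover have "- (norm (u - w) * norm (x - x0)) \<le> inner (u - w) (x - x0)"
      using Cauchy_Schwarz_ineq2[of "u - w" "x - x0"] by linarith
    ultimately show ?thesis
      unfolding \<phi>[of x] K_def by (simp add: inner_diff_left algebra_simps)
  qed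
  then show thesis by (rule that)
qed

lemma loc_subdiff_lsc_centred:
  assumes "(a, v) \<in> loc_subdiff_lsc f x0" "f x0 = ereal F"
  obtains \<delta> where "0 \<le> a" "0 < \<delta>"
    and "\<And>x. norm (x - x0) < \<delta> \<Longrightarrow>
      ereal (F + inner (v - (2 * a) *\<^sub>R x0) (x - x0) - a * (norm (x - x0))\<^sup>2) \<le> f x"
proof -
  obtain \<delta> where "0 \<le> a" "0 < \<delta>" and loc: "\<And>x. norm (x - x0) < \<delta> \<Longrightarrow>
      ereal (inner v (x - x0) - a * (norm x)\<^sup>2 + a * (norm x0)\<^sup>2) \<le> f x - f x0"
    using assms(1) unfolding loc_subdiff_lsc_def by auto
  have "ereal (F + inner (v - (2 * a) *\<^sub>R x0) (x - x0) - a * (norm (x - x0))\<^sup>2) \<le> f x"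
    if "norm (x - x0) < \<delta>" for x
    using loc[OF that] unfolding quadratic_recentre assms(2)
    by (cases "f x") (simp_all add: algebra_simps)
  with \<open>0 \<le> a\<close> \<open>0 < \<delta>\<close> show thesis by (rule that)
qed

lemma subdiff_lsc_of_centred_minorant:
  assumes "f x0 = ereal F" "0 \<le> b"
    and "\<And>x. ereal (F + inner w (x - x0) - b * (norm (x - x0))\<^sup>2) \<le> f x"
  shows "(b, w + (2 * b) *\<^sub>R x0) \<in> subdiff_lsc f x0"
proof -
  have "ereal (inner (w + (2 * b) *\<^sub>R x0) (x - x0) - b * (norm x)\<^sup>2 + b * (norm x0)\<^sup>2)
      \<le> f x - f x0" for x
    using assms(3)[of x] unfolding quadratic_recentre assms(1)
    by (cases "f x") (simp_all add: algebra_simps)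
  with assms(2) show ?thesis
    unfolding subdiff_lsc_def eps_subdiff_lsc_def by simp
qed

lemma centred_minorant_max_curvature:
  fixes x0 w :: "'a::real_inner"
  assumes near: "\<And>x. norm (x - x0) < \<delta> \<Longrightarrow>
      ereal (F + inner w (x - x0) - a * (norm (x - x0))\<^sup>2) \<le> f x"
    and far: "\<And>x. \<delta> \<le> norm (x - x0) \<Longrightarrow>
      ereal (F + inner w (x - x0) - b * (norm (x - x0))\<^sup>2) \<le> f x"
  shows "ereal (F + inner w (x - x0) - max a b * (norm (x - x0))\<^sup>2) \<le> f x"
proof (cases "norm (x - x0) < \<delta>")
  case True
  have "a * (norm (x - x0))\<^sup>2 \<le> max a b * (norm (x - x0))\<^sup>2"
    by (simp add: mult_right_mono)
  then show ?thesis by (intro order_trans[OF _ near[OF True]]) simp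
next
  case False
  have "b * (norm (x - x0))\<^sup>2 \<le> max a b * (norm (x - x0))\<^sup>2"
    by (simp add: mult_right_mono)
  then show ?thesis using False by (intro order_trans[OF _ far]) simp_all
qed

theorem mainTheorem3:
  fixes f :: "'a::{real_inner, complete_space} \<Rightarrow> ereal"
    and xb v :: 'a and a :: real
  assumes "\<forall>x. f x \<noteq> -\<infinity>"
    and "proper_fun f"
    and "Phi_lsc_convex f"
    and "xb \<in> edom f"
    and "(a, v) \<in> loc_subdiff_lsc f xb"
  shows "\<exists>ab\<ge>0. (ab, v - (2 * a) *\<^sub>R xb + (2 * ab) *\<^sub>R xb) \<in> subdiff_lsc f xb"
proof -
  define w where "w = v - (2 * a) *\<^sub>R xb"
  obtain F where F: "f xb = ereal F"
    using assms(1,4) unfolding edom_def by (cases "f xb") auto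
  obtain \<delta> where "0 \<le> a" "0 < \<delta>"
    and near: "\<And>x. norm (x - xb) < \<delta> \<Longrightarrow>
      ereal (F + inner w (x - xb) - a * (norm (x - xb))\<^sup>2) \<le> f x"
    using loc_subdiff_lsc_centred[OF assms(5) F] unfolding w_def by blast
  obtain \<phi> where "\<phi> \<in> Phi_lsc" and \<phi>_le: "\<And>x. ereal (\<phi> x) \<le> f x"
    using assms(2) unfolding proper_fun_def supp_def by auto
  obtain b where "\<And>x. \<delta> \<le> norm (x - xb) \<Longrightarrow>
      F + inner w (x - xb) - b * (norm (x - xb))\<^sup>2 \<le> \<phi> x"
    using Phi_lsc_above_centred_quadratic_outside_ball[OF \<open>\<phi> \<in> Phi_lsc\<close> \<open>0 < \<delta>\<close>] by blast
  then have far: "\<And>x. \<delta> \<le> norm (x - xb) \<Longrightarrow>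
      ereal (F + inner w (x - xb) - b * (norm (x - xb))\<^sup>2) \<le> f x"
    using \<phi>_le order_trans ereal_less_eq(3) by blast
  have "0 \<le> max a b" using \<open>0 \<le> a\<close> by simp
  then have "(max a b, w + (2 * max a b) *\<^sub>R xb) \<in> subdiff_lsc f xb"
    using subdiff_lsc_of_centred_minorant[of f xb F _ w]
      centred_minorant_max_curvature[OF near far] F by blast
  with \<open>0 \<le> max a b\<close> show ?thesis unfolding w_def by blast
qed

end
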